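(* For every strongly connected component $C$ of $G$, the set $\Delta_C$ is connected.
   Context: $G$ is a finite directed graph (loops allowed) with vertex set $V$. $\Omega$ is the set of bi-infinite paths in $G$, i.e. sequences $(x_i)_{i\in\mathbb Z}\in V^{\mathbb Z}$ such that for every $i$ there is an edge from $x_i$ to $x_{i+1}$. Fix $h>0$. $\bar\Delta$ is the set of functions $x:\mathbb R\to V$ that are constant on each interval $[nh,(n+1)h)$, $n\in\mathbb Z$, and satisfy $(x(ih))_{i\in\mathbb Z}\in\Omega$. $\Delta=\{x(\cdot+t): x\in\bar\Delta,\ t\in\mathbb R\}$, with metric $d(x,y)=\sum_{i\in\mathbb Z}4^{-|i|}\frac1h\int_{ih}^{(i+1)h}\delta(x,y,t)\,dt$, where $\delta(x,y,t)=1$ if $x(t)\ne y(t)$ and $0$ otherwise. A strongly connected component of $G$ is a maximal nonempty set $C\subseteq V$ such that for all $u,v\in C$ (including $u=v$) there is a directed path of positive length from $u$ to $v$ with all vertices in $C$. The lift of $C$ is $\Delta_C=\{f\in\Delta: f(t)\in C \text{ for all } t\in\mathbb R\}$. *)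

theory Defs
  imports "HOL-Analysis.Analysis"
begin

text \<open>A finite directed graph (loops allowed) is given by a finite vertex type 'v
and an edge relation E.\<close>

definition Omega :: "('v \<times> 'v) set \<Rightarrow> (int \<Rightarrow> 'v) set" where
  "Omega E = {x. \<forall>i. (x i, x (i + 1)) \<in> E}"

definition Delta_bar :: "('v \<times> 'v) set \<Rightarrow> real \<Rightarrow> (real \<Rightarrow> 'v) set" where
  "Delta_bar E h = {x. (\<forall>n::int. \<forall>t. real_of_int n * h \<le> t \<and> t < (real_of_int n + 1) * h
                        \<longrightarrow> x t = x (real_of_int n * h))
                   \<and> (\<lambda>i::int. x (real_of_int i * h)) \<in> Omega E}"

definition Delta :: "('v \<times> 'v) set \<Rightarrow> real \<Rightarrow> (real \<Rightarrow> 'v) set" where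
  "Delta E h = {(\<lambda>s. x (s + t)) | x t. x \<in> Delta_bar E h}"

definition traj_dist :: "real \<Rightarrow> (real \<Rightarrow> 'v) \<Rightarrow> (real \<Rightarrow> 'v) \<Rightarrow> real" where
  "traj_dist h x y = (\<Sum>\<^sub>\<infinity>i::int. (1/4) ^ nat \<bar>i\<bar> * (1 / h) *
      integral {real_of_int i * h .. (real_of_int i + 1) * h} (\<lambda>t. if x t \<noteq> y t then 1 else 0))"

definition strongly_conn :: "('v \<times> 'v) set \<Rightarrow> 'v set \<Rightarrow> bool" where
  "strongly_conn E C \<longleftrightarrow> C \<noteq> {} \<and> (\<forall>u\<in>C. \<forall>v\<in>C. (u, v) \<in> (E \<inter> C \<times> C)\<^sup>+)"

definition scc :: "('v \<times> 'v) set \<Rightarrow> 'v set \<Rightarrow> bool" where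
  "scc E C \<longleftrightarrow> strongly_conn E C \<and> (\<forall>D. C \<subseteq> D \<and> strongly_conn E D \<longrightarrow> D = C)"

definition lift :: "('v \<times> 'v) set \<Rightarrow> real \<Rightarrow> 'v set \<Rightarrow> (real \<Rightarrow> 'v) set" where
  "lift E h C = {f \<in> Delta E h. \<forall>t. f t \<in> C}"

end

theory Submission
  imports Defs
begin

text \<open>Every element of the lift of \<open>C\<close> is a suspended path \<open>u \<mapsto> y \<lfloor>(u + c) / h\<rfloor>\<close>
with \<open>y\<close> a bi-infinite path in \<open>C\<close>. Changing the offset \<open>c\<close> moves such a trajectory in a
Lipschitz way, so the orbit of a single path is a connected subset of the lift. Since the metric
discounts the window \<open>[i h, (i + 1) h]\<close> by \<open>4 ^ (- \<bar>i\<bar>)\<close>, trajectories that agree on a long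
window around \<open>0\<close> are close. Strong connectivity of \<open>C\<close> lets us splice the past of one path
to the future of another, so the orbit of the spliced path comes arbitrarily close to any two
given elements of the lift; hence no two disjoint open sets can separate it.\<close>

lemma floor_divide_eq_iff:
  fixes h z :: real
  assumes "h > 0"
  shows "\<lfloor>z / h\<rfloor> = k \<longleftrightarrow> of_int k * h \<le> z \<and> z < (of_int k + 1) * h"
  using assms by (simp add: floor_eq_iff pos_le_divide_eq pos_divide_less_eq)

lemma floor_divide_bounds:
  fixes h z :: real
  assumes "h > 0"
  shows "of_int \<lfloor>z / h\<rfloor> * h \<le> z" and "z < (of_int \<lfloor>z / h\<rfloor> + 1) * h"
  using floor_divide_eq_iff[OF assms, of z "\<lfloor>z / h\<rfloor>"] by simp_all

section \<open>Right-continuous step functions\<close>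

definition locally_step :: "(real \<Rightarrow> 'b) \<Rightarrow> bool" where
  "locally_step F \<longleftrightarrow> (\<forall>x. \<exists>d>0. \<exists>c.
     (\<forall>u. x - d < u \<and> u < x \<longrightarrow> F u = c) \<and> (\<forall>u. x \<le> u \<and> u < x + d \<longrightarrow> F u = F x))"

lemma locally_step_comp2:
  assumes "locally_step F" "locally_step G"
  shows "locally_step (\<lambda>u. \<Phi> (F u) (G u))"
  unfolding locally_step_def
proof
  fix x
  obtain d1 c1 where d1: "d1 > 0" "\<forall>u. x - d1 < u \<and> u < x \<longrightarrow> F u = c1"
    "\<forall>u. x \<le> u \<and> u < x + d1 \<longrightarrow> F u = F x"
    using assms(1) unfolding locally_step_def by blast
  obtain d2 c2 where d2: "d2 > 0" "\<forall>u. x - d2 < u \<and> u < x \<longrightarrow> G u = c2"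
    "\<forall>u. x \<le> u \<and> u < x + d2 \<longrightarrow> G u = G x"
    using assms(2) unfolding locally_step_def by blast
  show "\<exists>d>0. \<exists>c. (\<forall>u. x - d < u \<and> u < x \<longrightarrow> \<Phi> (F u) (G u) = c) \<and>
      (\<forall>u. x \<le> u \<and> u < x + d \<longrightarrow> \<Phi> (F u) (G u) = \<Phi> (F x) (G x))"
  proof (intro exI[of _ "min d1 d2"] exI[of _ "\<Phi> c1 c2"] conjI allI impI)
    fix u assume "x - min d1 d2 < u \<and> u < x"
    then have "x - d1 < u \<and> u < x" "x - d2 < u \<and> u < x" by auto
    then have "F u = c1" "G u = c2" using d1(2) d2(2) by blast+
    then show "\<Phi> (F u) (G u) = \<Phi> c1 c2" by simp
  next
    fix u assume "x \<le> u \<and> u < x + min d1 d2"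
    then have "x \<le> u \<and> u < x + d1" "x \<le> u \<and> u < x + d2" by auto
    then have "F u = F x" "G u = G x" using d1(3) d2(3) by blast+
    then show "\<Phi> (F u) (G u) = \<Phi> (F x) (G x)" by simp
  qed (simp add: d1 d2)
qed

lemma locally_step_integrable_on:
  fixes F :: "real \<Rightarrow> real"
  assumes "locally_step F"
  shows "F integrable_on {a..b}"
  unfolding cbox_interval[symmetric]
proof (rule integrable_on_little_subintervals, intro ballI)
  fix x
  obtain d c where d: "d > 0" "\<forall>u. x - d < u \<and> u < x \<longrightarrow> F u = c"
    "\<forall>u. x \<le> u \<and> u < x + d \<longrightarrow> F u = F x"
    using assms unfolding locally_step_def by blast
  have "F integrable_on cbox u v" if "x \<in> cbox u v" "cbox u v \<subseteq> ball x d" for u v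
  proof -
    have uv: "u \<le> x" "x \<le> v"
      using that by auto
    then have "u \<in> ball x d" "v \<in> ball x d"
      using that(2) by (auto simp: subset_eq)
    then have uv': "x - d < u" "v < x + d"
      by (auto simp: dist_real_def)
    have "F integrable_on {u..x}"
    proof (rule integrable_spike[OF integrable_const_ivl negligible_sing[of x]])
      show "F y = c" if "y \<in> {u..x} - {x}" for y
        using that uv' d(2) by auto
    qed
    moreover have "F integrable_on {x..v}"
    proof (rule integrable_spike[OF integrable_const_ivl negligible_empty])
      show "F y = F x" if "y \<in> {x..v} - {}" for y
        using that uv' d(3) by (meson DiffD1 atLeastAtMost_iff le_less_trans)
    qed
    ultimately show ?thesis
      using Henstock_Kurzweil_Integration.integrable_combine[OF uv] by simp
  qed
  then show "\<exists>d>0. \<forall>u v. x \<in> cbox u v \<and> cbox u v \<subseteq> ball x d \<and> cbox u v \<subseteq> cbox a b \<longrightarrow>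
      F integrable_on cbox u v"
    using d(1) by blast
qed

section \<open>Trajectories as suspended paths\<close>

definition suspension :: "real \<Rightarrow> (int \<Rightarrow> 'v) \<Rightarrow> real \<Rightarrow> real \<Rightarrow> 'v" where
  "suspension h y c u = y \<lfloor>(u + c) / h\<rfloor>"

lemma locally_step_suspension:
  assumes "h > 0"
  shows "locally_step (suspension h Y a)"
  unfolding locally_step_def suspension_def
proof
  fix x
  define k where "k = \<lfloor>(x + a) / h\<rfloor>"
  \<comment> \<open>the step just left of \<open>x\<close>; it differs from \<open>k\<close> exactly when \<open>x + a\<close> is a multiple of \<open>h\<close>\<close>
  define k' where "k' = \<lceil>(x + a) / h\<rceil> - 1"
  have k: "of_int k * h \<le> x + a" "x + a < (of_int k + 1) * h"
    unfolding k_def by (rule floor_divide_bounds[OF assms])+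
  have "of_int k' < (x + a) / h" "(x + a) / h \<le> of_int k' + 1"
    unfolding k'_def by linarith+
  then have k': "of_int k' * h < x + a" "x + a \<le> (of_int k' + 1) * h"
    using assms by (simp_all add: pos_less_divide_eq pos_divide_le_eq)
  define d where "d = min ((of_int k + 1) * h - (x + a)) (x + a - of_int k' * h)"
  have "d > 0" using k k' by (simp add: d_def)
  moreover have "\<forall>u. x - d < u \<and> u < x \<longrightarrow> Y \<lfloor>(u + a) / h\<rfloor> = Y k'"
  proof (intro allI impI)
    fix u assume "x - d < u \<and> u < x"
    moreover have "x - d \<ge> of_int k' * h - a" by (simp add: d_def)
    ultimately have "\<lfloor>(u + a) / h\<rfloor> = k'"
      unfolding floor_divide_eq_iff[OF assms] using k' by linarith
    then show "Y \<lfloor>(u + a) / h\<rfloor> = Y k'" by simp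
  qed
  moreover have "\<forall>u. x \<le> u \<and> u < x + d \<longrightarrow> Y \<lfloor>(u + a) / h\<rfloor> = Y \<lfloor>(x + a) / h\<rfloor>"
  proof (intro allI impI)
    fix u assume "x \<le> u \<and> u < x + d"
    moreover have "x + d \<le> (of_int k + 1) * h - a" by (simp add: d_def)
    ultimately have "\<lfloor>(u + a) / h\<rfloor> = k"
      unfolding floor_divide_eq_iff[OF assms] using k by linarith
    then show "Y \<lfloor>(u + a) / h\<rfloor> = Y \<lfloor>(x + a) / h\<rfloor>" by (simp add: k_def)
  qed
  ultimately show "\<exists>d>0. \<exists>c. (\<forall>u. x - d < u \<and> u < x \<longrightarrow> Y \<lfloor>(u + a) / h\<rfloor> = c) \<and>
      (\<forall>u. x \<le> u \<and> u < x + d \<longrightarrow> Y \<lfloor>(u + a) / h\<rfloor> = Y \<lfloor>(x + a) / h\<rfloor>)"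
    by blast
qed

lemma mem_Delta_iff:
  assumes "h > 0"
  shows "z \<in> Delta E h \<longleftrightarrow> (\<exists>y c. y \<in> Omega E \<and> z = suspension h y c)"
proof
  assume "z \<in> Delta E h"
  then obtain x t where z: "z = (\<lambda>s. x (s + t))" and x: "x \<in> Delta_bar E h"
    unfolding Delta_def by blast
  define y where "y i = x (of_int i * h)" for i
  have "y \<in> Omega E"
    using x unfolding Delta_bar_def y_def by blast
  moreover have "x u = y \<lfloor>u / h\<rfloor>" for u
    using x floor_divide_bounds[OF assms, of u] unfolding Delta_bar_def y_def by blast
  then have "z = suspension h y t"
    by (simp add: z suspension_def[abs_def])
  ultimately show "\<exists>y c. y \<in> Omega E \<and> z = suspension h y c"
    by blast
next
  assume "\<exists>y c. y \<in> Omega E \<and> z = suspension h y c"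
  then obtain y c where y: "y \<in> Omega E" and z: "z = suspension h y c"
    by blast
  have "suspension h y 0 \<in> Delta_bar E h"
    unfolding Delta_bar_def
  proof (intro CollectI conjI allI impI)
    fix n :: int and t
    assume "of_int n * h \<le> t \<and> t < (of_int n + 1) * h"
    then have "\<lfloor>t / h\<rfloor> = n"
      by (simp add: floor_divide_eq_iff[OF assms])
    then show "suspension h y 0 t = suspension h y 0 (of_int n * h)"
      using assms by (simp add: suspension_def)
  qed (use y assms in \<open>simp add: suspension_def\<close>)
  moreover have "z = (\<lambda>s. suspension h y 0 (s + c))"
    by (simp add: z suspension_def[abs_def])
  ultimately show "z \<in> Delta E h"
    unfolding Delta_def by blast
qed

lemma mem_lift_iff:
  assumes "h > 0"
  shows "z \<in> lift E h C \<longleftrightarrow> (\<exists>y c. y \<in> Omega E \<and> range y \<subseteq> C \<and> z = suspension h y c)"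
proof
  assume z: "z \<in> lift E h C"
  then obtain y c where y: "y \<in> Omega E" and zy: "z = suspension h y c"
    unfolding lift_def mem_Delta_iff[OF assms] by blast
  have "y i = z (of_int i * h - c)" for i
    using assms by (simp add: zy suspension_def)
  then have "range y \<subseteq> C"
    using z unfolding lift_def by auto
  with y zy show "\<exists>y c. y \<in> Omega E \<and> range y \<subseteq> C \<and> z = suspension h y c"
    by blast
next
  assume "\<exists>y c. y \<in> Omega E \<and> range y \<subseteq> C \<and> z = suspension h y c"
  then show "z \<in> lift E h C"
    unfolding lift_def mem_Delta_iff[OF assms] by (auto simp: suspension_def)
qed

section \<open>The trajectory metric\<close>

definition mismatch :: "(real \<Rightarrow> 'v) \<Rightarrow> (real \<Rightarrow> 'v) \<Rightarrow> real \<Rightarrow> real" where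
  "mismatch x y t = (if x t \<noteq> y t then 1 else 0)"

definition traj_dist_term :: "real \<Rightarrow> (real \<Rightarrow> 'v) \<Rightarrow> (real \<Rightarrow> 'v) \<Rightarrow> int \<Rightarrow> real" where
  "traj_dist_term h x y i =
     (1/4) ^ nat \<bar>i\<bar> * (1 / h) * integral {of_int i * h .. (of_int i + 1) * h} (mismatch x y)"

lemma traj_dist_eq_infsum: "traj_dist h x y = (\<Sum>\<^sub>\<infinity>i. traj_dist_term h x y i)"
  unfolding traj_dist_def traj_dist_term_def mismatch_def[abs_def] ..

lemma locally_step_mismatch:
  assumes "locally_step x" "locally_step y"
  shows "locally_step (mismatch x y)"
  using locally_step_comp2[OF assms, of "\<lambda>a b. if a \<noteq> b then 1 else 0 :: real"]
  by (simp add: mismatch_def[abs_def])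

lemma mismatch_commute: "mismatch x y = mismatch y x"
  by (auto simp: mismatch_def)

lemma integral_mismatch_bounds:
  assumes "a \<le> b"
  shows "0 \<le> integral {a..b} (mismatch x y)" and "integral {a..b} (mismatch x y) \<le> b - a"
proof -
  have "0 \<le> integral {a..b} (mismatch x y) \<and> integral {a..b} (mismatch x y) \<le> b - a"
  proof (cases "mismatch x y integrable_on {a..b}")
    case True
    have "integral {a..b} (mismatch x y) \<le> integral {a..b} (\<lambda>_. 1)"
      by (rule integral_le[OF True integrable_const_ivl]) (simp add: mismatch_def)
    with True assms show ?thesis
      by (simp add: integral_nonneg mismatch_def)
  qed (simp add: assms not_integrable_integral)
  then show "0 \<le> integral {a..b} (mismatch x y)" "integral {a..b} (mismatch x y) \<le> b - a"
    by auto
qed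

lemma traj_dist_term_nonneg: "h > 0 \<Longrightarrow> 0 \<le> traj_dist_term h x y i"
  unfolding traj_dist_term_def by (simp add: integral_mismatch_bounds(1))

lemma traj_dist_term_le:
  assumes "h > 0"
  shows "traj_dist_term h x y i \<le> (1/4) ^ nat \<bar>i\<bar>"
proof -
  have "integral {of_int i * h .. (of_int i + 1) * h} (mismatch x y) \<le> h"
    using integral_mismatch_bounds(2)[of "of_int i * h" "(of_int i + 1) * h" x y] assms
    by (simp add: algebra_simps)
  then have "traj_dist_term h x y i \<le> (1/4) ^ nat \<bar>i\<bar> * (1/h) * h"
    unfolding traj_dist_term_def using assms by (intro mult_left_mono) auto
  then show ?thesis
    using assms by simp
qed

lemma has_sum_power_abs_int:
  fixes q :: real
  assumes "0 \<le> q" "q < 1"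
  shows "((\<lambda>i::int. q ^ nat \<bar>i\<bar>) has_sum ((1 + q) / (1 - q))) UNIV"
proof -
  let ?g = "\<lambda>i::int. q ^ nat \<bar>i\<bar>"
  have "(\<lambda>n. q ^ n) sums (1 / (1 - q))"
    using geometric_sums[of q] assms by simp
  then have nonneg: "((\<lambda>n::nat. q ^ n) has_sum (1 / (1 - q))) UNIV"
    by (rule sums_nonneg_imp_has_sum) (use assms in auto)
  then have neg: "((\<lambda>n::nat. q * q ^ n) has_sum (q / (1 - q))) UNIV"
    using has_sum_cmult_right[OF nonneg, of q] by simp
  have "(?g has_sum (1 / (1 - q))) (range int)"
    by (subst has_sum_reindex) (auto simp: o_def nonneg inj_on_def)
  moreover have "(?g has_sum (q / (1 - q))) (range (\<lambda>n::nat. - int n - 1))"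
    by (subst has_sum_reindex) (auto simp: o_def inj_on_def nat_add_distrib neg)
  moreover have "range int \<union> range (\<lambda>n::nat. - int n - 1) = (UNIV :: int set)"
  proof -
    have "i \<in> range int \<or> i \<in> range (\<lambda>n::nat. - int n - 1)" for i :: int
      by (cases "i \<ge> 0")
        (auto intro: image_eqI[of _ _ "nat i"] image_eqI[of _ _ "nat (- i - 1)"])
    then show ?thesis by blast
  qed
  ultimately have "(?g has_sum (1 / (1 - q) + q / (1 - q))) UNIV"
    using has_sum_Un_disjoint by fastforce
  moreover have "1 / (1 - q) + q / (1 - q) = (1 + q) / (1 - q)"
    using assms by (simp add: field_simps)
  ultimately show ?thesis by simp
qed

lemma summable_and_infsum_le_half_power:
  fixes a :: "int \<Rightarrow> real"
  assumes "\<And>i. 0 \<le> a i" "\<And>i. a i \<le> B * (1/2) ^ nat \<bar>i\<bar>"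
  shows "a summable_on UNIV" and "(\<Sum>\<^sub>\<infinity>i. a i) \<le> 3 * B"
proof -
  have "((\<lambda>i::int. B * (1/2) ^ nat \<bar>i\<bar>) has_sum (B * 3)) UNIV"
    using has_sum_cmult_right[OF has_sum_power_abs_int[of "1/2"]] by simp
  then show "a summable_on UNIV" "(\<Sum>\<^sub>\<infinity>i. a i) \<le> 3 * B"
    using assms summable_on_comparison_test[of "\<lambda>i. B * (1/2) ^ nat \<bar>i\<bar>" UNIV a]
      infsum_mono[of a UNIV "\<lambda>i. B * (1/2) ^ nat \<bar>i\<bar>"]
    by (auto simp: has_sum_imp_summable infsumI)
qed

lemma traj_dist_term_summable:
  assumes "h > 0"
  shows "traj_dist_term h x y summable_on UNIV"
proof (rule summable_and_infsum_le_half_power(1)[where B = 1])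
  show "traj_dist_term h x y i \<le> 1 * (1/2) ^ nat \<bar>i\<bar>" for i
    using traj_dist_term_le[OF assms, of x y i] power_mono[of "1/4" "1/2::real" "nat \<bar>i\<bar>"]
    by simp
qed (rule traj_dist_term_nonneg[OF assms])

lemma traj_dist_nonneg: "h > 0 \<Longrightarrow> 0 \<le> traj_dist h x y"
  unfolding traj_dist_eq_infsum by (rule infsum_nonneg) (rule traj_dist_term_nonneg)

lemma traj_dist_commute: "traj_dist h x y = traj_dist h y x"
  unfolding traj_dist_eq_infsum traj_dist_term_def mismatch_commute[of x y] ..

lemma traj_dist_self: "traj_dist h x x = 0"
proof -
  have "mismatch x x = (\<lambda>_. 0)"
    by (simp add: mismatch_def[abs_def])
  then show ?thesis
    unfolding traj_dist_eq_infsum traj_dist_term_def by simp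
qed

lemma traj_dist_term_le_traj_dist:
  assumes "h > 0"
  shows "traj_dist_term h x y i \<le> traj_dist h x y"
proof -
  have "(\<Sum>\<^sub>\<infinity>j\<in>{i}. traj_dist_term h x y j) \<le> (\<Sum>\<^sub>\<infinity>j. traj_dist_term h x y j)"
    by (rule infsum_mono_neutral)
      (use traj_dist_term_summable[OF assms] traj_dist_term_nonneg[OF assms] in auto)
  then show ?thesis
    unfolding traj_dist_eq_infsum by simp
qed

lemma traj_dist_eq_0_imp_eq:
  assumes h: "h > 0" and x: "locally_step x" and y: "locally_step y"
    and dist: "traj_dist h x y = 0"
  shows "x = y"
proof (rule ccontr)
  assume "x \<noteq> y"
  then obtain u0 where "x u0 \<noteq> y u0"
    by auto
  then have "mismatch x y u0 = 1"
    by (simp add: mismatch_def)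
  then obtain d where d: "d > 0" "\<forall>u. u0 \<le> u \<and> u < u0 + d \<longrightarrow> mismatch x y u = 1"
    using locally_step_mismatch[OF x y] unfolding locally_step_def by metis
  define i where "i = \<lfloor>u0 / h\<rfloor>"
  have i: "of_int i * h \<le> u0" "u0 < (of_int i + 1) * h"
    unfolding i_def by (rule floor_divide_bounds[OF h])+
  define e where "e = min (d / 2) ((of_int i + 1) * h - u0)"
  have e: "e > 0" "e < d" "u0 + e \<le> (of_int i + 1) * h"
    using d i by (auto simp: e_def)
  let ?I = "{of_int i * h .. (of_int i + 1) * h}"
  have "e = integral {u0 .. u0 + e} (\<lambda>_. 1::real)"
    using e by simp
  also have "\<dots> = integral {u0 .. u0 + e} (mismatch x y)"
    by (rule integral_cong) (use d e in auto)
  also have "\<dots> \<le> integral ?I (mismatch x y)"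
    by (rule integral_subset_le) (use i e in \<open>auto simp: mismatch_def
        intro: locally_step_integrable_on[OF locally_step_mismatch[OF x y]]\<close>)
  finally have "traj_dist_term h x y i > 0"
    unfolding traj_dist_term_def using h e by (intro mult_pos_pos) auto
  with traj_dist_term_le_traj_dist[OF h, of x y i] dist show False
    by simp
qed

lemma traj_dist_triangle:
  assumes h: "h > 0" and x: "locally_step x" and y: "locally_step y" and z: "locally_step z"
  shows "traj_dist h x z \<le> traj_dist h x y + traj_dist h y z"
proof -
  have pointwise: "traj_dist_term h x z i \<le> traj_dist_term h x y i + traj_dist_term h y z i" for i
  proof -
    let ?I = "{of_int i * h .. (of_int i + 1) * h}"
    have int: "mismatch x y integrable_on ?I" "mismatch y z integrable_on ?I"
      "mismatch x z integrable_on ?I"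
      using locally_step_integrable_on locally_step_mismatch x y z by blast+
    have "integral ?I (mismatch x z) \<le> integral ?I (\<lambda>t. mismatch x y t + mismatch y z t)"
      by (rule integral_le[OF int(3) integrable_add[OF int(1,2)]]) (auto simp: mismatch_def)
    also have "\<dots> = integral ?I (mismatch x y) + integral ?I (mismatch y z)"
      by (rule integral_add[OF int(1,2)])
    finally have "integral ?I (mismatch x z) \<le> integral ?I (mismatch x y) + integral ?I (mismatch y z)" .
    moreover have "0 \<le> (1/4::real) ^ nat \<bar>i\<bar> * (1 / h)"
      using h by simp
    ultimately show ?thesis
      unfolding traj_dist_term_def by (metis distrib_left mult_left_mono)
  qed
  have "traj_dist h x z \<le> (\<Sum>\<^sub>\<infinity>i. traj_dist_term h x y i + traj_dist_term h y z i)"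
    unfolding traj_dist_eq_infsum
    by (rule infsum_mono[OF traj_dist_term_summable[OF h] summable_on_add pointwise])
      (rule traj_dist_term_summable[OF h])+
  also have "\<dots> = traj_dist h x y + traj_dist h y z"
    unfolding traj_dist_eq_infsum by (intro infsum_add traj_dist_term_summable[OF h])
  finally show ?thesis .
qed

lemma locally_step_Delta:
  assumes "h > 0" "x \<in> Delta E h"
  shows "locally_step x"
  using assms(2) locally_step_suspension[OF assms(1)] unfolding mem_Delta_iff[OF assms(1)] by auto

lemma Metric_space_Delta:
  assumes h: "h > 0"
  shows "Metric_space (Delta E h) (traj_dist h)"
proof
  fix x y z
  assume "x \<in> Delta E h" "y \<in> Delta E h" "z \<in> Delta E h"
  then have xyz: "locally_step x" "locally_step y" "locally_step z"
    using locally_step_Delta[OF h] by blast+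
  show "traj_dist h x z \<le> traj_dist h x y + traj_dist h y z"
    by (rule traj_dist_triangle[OF h xyz])
  show "traj_dist h x y = 0 \<longleftrightarrow> x = y"
    using traj_dist_eq_0_imp_eq[OF h xyz(1,2)] traj_dist_self by blast
qed (simp_all add: h traj_dist_nonneg traj_dist_commute)

lemma has_integral_floor_divide:
  fixes h b p :: real
  assumes h: "h > 0"
  shows "((\<lambda>u. of_int \<lfloor>(u + b) / h\<rfloor>) has_integral (p + b)) {p .. p + h}"
proof -
  define n where "n = \<lfloor>(p + b) / h\<rfloor>"
  have n: "of_int n * h \<le> p + b" "p + b < (of_int n + 1) * h"
    unfolding n_def by (rule floor_divide_bounds[OF h])+
  define q where "q = (of_int n + 1) * h - b"
  have pq: "p \<le> q" "q \<le> p + h"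
    using n by (auto simp: q_def algebra_simps)
  have const: "((\<lambda>_. of_int n :: real) has_integral ((q - p) * of_int n)) {p..q}"
    "((\<lambda>_. of_int n + 1 :: real) has_integral ((p + h - q) * (of_int n + 1))) {q..p+h}"
    using has_integral_const_real[of "of_int n :: real" p q]
      has_integral_const_real[of "of_int n + 1 :: real" q "p + h"] pq
    by simp_all
  have "((\<lambda>u. of_int \<lfloor>(u + b) / h\<rfloor>) has_integral ((q - p) * of_int n)) {p..q}"
  proof (rule has_integral_spike[OF negligible_sing _ const(1)])
    fix u assume "u \<in> {p..q} - {q}"
    then have "\<lfloor>(u + b) / h\<rfloor> = n"
      using n by (auto simp: floor_divide_eq_iff[OF h] q_def)
    then show "of_int \<lfloor>(u + b) / h\<rfloor> = (of_int n :: real)" by simp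
  qed
  moreover have "((\<lambda>u. of_int \<lfloor>(u + b) / h\<rfloor>) has_integral ((p + h - q) * (of_int n + 1))) {q..p+h}"
  proof (rule has_integral_spike[OF negligible_empty _ const(2)])
    fix u assume "u \<in> {q..p+h} - {}"
    then have "\<lfloor>(u + b) / h\<rfloor> = n + 1"
      using n by (auto simp: floor_divide_eq_iff[OF h] q_def algebra_simps)
    then show "of_int \<lfloor>(u + b) / h\<rfloor> = (of_int n + 1 :: real)" by simp
  qed
  ultimately have "((\<lambda>u. of_int \<lfloor>(u + b) / h\<rfloor>) has_integral
      ((q - p) * of_int n + (p + h - q) * (of_int n + 1))) {p..p+h}"
    by (rule Henstock_Kurzweil_Integration.has_integral_combine[OF pq])
  moreover have "(q - p) * of_int n + (p + h - q) * (of_int n + 1) = p + b"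
    by (simp add: q_def algebra_simps)
  ultimately show ?thesis
    by simp
qed

lemma integral_mismatch_suspension_le:
  assumes h: "h > 0" and ab: "a \<le> b"
  shows "integral {p .. p + h} (mismatch (suspension h Y a) (suspension h Y b)) \<le> b - a"
proof -
  let ?G = "\<lambda>u. of_int \<lfloor>(u + b) / h\<rfloor> - of_int \<lfloor>(u + a) / h\<rfloor> :: real"
  have G: "(?G has_integral (b - a)) {p .. p + h}"
    using has_integral_diff[OF has_integral_floor_divide has_integral_floor_divide] h by simp
  have "mismatch (suspension h Y a) (suspension h Y b) u \<le> ?G u" for u
  proof -
    have "\<lfloor>(u + a) / h\<rfloor> \<le> \<lfloor>(u + b) / h\<rfloor>"
      using ab h by (intro floor_mono divide_right_mono) auto
    then show ?thesis
      by (cases "\<lfloor>(u + a) / h\<rfloor> = \<lfloor>(u + b) / h\<rfloor>") (auto simp: mismatch_def suspension_def)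
  qed
  then have "integral {p .. p + h} (mismatch (suspension h Y a) (suspension h Y b)) \<le> integral {p .. p + h} ?G"
    using locally_step_integrable_on[OF locally_step_mismatch[OF locally_step_suspension[OF h]
          locally_step_suspension[OF h]]] has_integral_integrable[OF G]
    by (intro integral_le) auto
  with G show ?thesis
    by (simp add: integral_unique)
qed

lemma traj_dist_suspension_le:
  assumes h: "h > 0"
  shows "traj_dist h (suspension h Y a) (suspension h Y b) \<le> 3 * (\<bar>b - a\<bar> / h)"
proof -
  have le: "traj_dist h (suspension h Y a) (suspension h Y b) \<le> 3 * ((b - a) / h)"
    if ab: "a \<le> b" for a b
    unfolding traj_dist_eq_infsum
  proof (rule summable_and_infsum_le_half_power(2))
    fix i
    have "integral {of_int i * h .. (of_int i + 1) * h} (mismatch (suspension h Y a) (suspension h Y b))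
        \<le> b - a"
      using integral_mismatch_suspension_le[OF h ab, of "of_int i * h" Y] by (simp add: algebra_simps)
    then have "traj_dist_term h (suspension h Y a) (suspension h Y b) i \<le> (1/4) ^ nat \<bar>i\<bar> * (1/h) * (b - a)"
      unfolding traj_dist_term_def using h by (intro mult_left_mono) auto
    also have "\<dots> \<le> (1/2) ^ nat \<bar>i\<bar> * (1/h) * (b - a)"
      using h ab by (intro mult_right_mono power_mono) auto
    finally show "traj_dist_term h (suspension h Y a) (suspension h Y b) i \<le> (b - a) / h * (1/2) ^ nat \<bar>i\<bar>"
      by (simp add: field_simps)
  qed (rule traj_dist_term_nonneg[OF h])
  show ?thesis
  proof (cases "a \<le> b")
    case True
    with le[OF True] show ?thesis
      by simp
  next
    case False
    with le[of b a] show ?thesis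
      by (subst traj_dist_commute) simp
  qed
qed

lemma traj_dist_le_if_agree:
  fixes K :: nat
  assumes h: "h > 0" and agree: "\<And>u. - (real K * h) \<le> u \<Longrightarrow> u \<le> (real K + 1) * h \<Longrightarrow> x u = y u"
  shows "traj_dist h x y \<le> 3 * (1/2) ^ K"
  unfolding traj_dist_eq_infsum
proof (rule summable_and_infsum_le_half_power(2))
  fix i
  show "traj_dist_term h x y i \<le> (1/2) ^ K * (1/2) ^ nat \<bar>i\<bar>"
  proof (cases "nat \<bar>i\<bar> \<le> K")
    case True
    then have "- real K \<le> of_int i" "of_int i + 1 \<le> real K + 1"
      by linarith+
    then have "- real K * h \<le> of_int i * h" "(of_int i + 1) * h \<le> (real K + 1) * h"
      using h by (simp_all only: mult_right_mono less_imp_le)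
    then have "mismatch x y t = 0" if "t \<in> {of_int i * h .. (of_int i + 1) * h}" for t
      using that agree by (auto simp: mismatch_def)
    then have "integral {of_int i * h .. (of_int i + 1) * h} (mismatch x y) = integral {of_int i * h .. (of_int i + 1) * h} (\<lambda>_. 0)"
      by (rule integral_cong)
    then have "traj_dist_term h x y i = 0"
      unfolding traj_dist_term_def by simp
    then show ?thesis
      by simp
  next
    case False
    have "traj_dist_term h x y i \<le> (1/4) ^ nat \<bar>i\<bar>"
      by (rule traj_dist_term_le[OF h])
    also have "\<dots> = (1/2) ^ nat \<bar>i\<bar> * (1/2) ^ nat \<bar>i\<bar>"
      by (simp add: power_mult_distrib[symmetric])
    also have "\<dots> \<le> (1/2) ^ K * (1/2) ^ nat \<bar>i\<bar>"
      using False by (intro mult_right_mono power_decreasing) auto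
    finally show ?thesis .
  qed
qed (rule traj_dist_term_nonneg[OF h])

section \<open>Splicing paths in a strongly connected component\<close>

lemma strongly_conn_walk:
  assumes "strongly_conn E C" "u \<in> C" "v \<in> C"
  obtains m w where "m > 0" "w 0 = u" "w m = v" "\<And>k. k < m \<Longrightarrow> (w k, w (Suc k)) \<in> E \<inter> C \<times> C"
proof -
  have "(u, v) \<in> (E \<inter> C \<times> C)\<^sup>+"
    using assms unfolding strongly_conn_def by blast
  then obtain m where "m > 0" "(u, v) \<in> (E \<inter> C \<times> C) ^^ m"
    using trancl_power by blast
  with that show thesis
    unfolding relpow_fun_conv by blast
qed

lemma Omega_glue:
  assumes sc: "strongly_conn E C"
    and p: "p \<in> Omega E" "range p \<subseteq> C" and q: "q \<in> Omega E" "range q \<subseteq> C"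
  obtains Y S where "Y \<in> Omega E" "range Y \<subseteq> C"
    "\<And>i. i \<le> M \<Longrightarrow> Y i = p i" "\<And>i. N \<le> i \<Longrightarrow> Y (i + S) = q i"
proof -
  obtain m w where m: "m > 0"
    and w: "w 0 = p M" "w m = q N" "\<And>k. k < m \<Longrightarrow> (w k, w (Suc k)) \<in> E \<inter> C \<times> C"
    using strongly_conn_walk[OF sc, of "p M" "q N"] p q by blast
  define S where "S = M + int m - N"
  define Y where
    "Y i = (if i \<le> M then p i else if i \<le> M + int m then w (nat (i - M)) else q (i - S))" for i
  have Y_p: "Y i = p i" if "i \<le> M" for i
    using that by (simp add: Y_def)
  have Y_w: "Y i = w (nat (i - M))" if "M \<le> i" "i \<le> M + int m" for i
    using that w(1) by (auto simp: Y_def)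
  have Y_q: "Y i = q (i - S)" if "M + int m \<le> i" for i
    using that m(1) w(2) Y_w[of i] by (cases "i = M + int m") (auto simp: Y_def S_def)
  have pC: "(p i, p (i + 1)) \<in> E \<inter> C \<times> C" and qC: "(q i, q (i + 1)) \<in> E \<inter> C \<times> C" for i
    using p q by (auto simp: Omega_def)
  have edge: "(Y i, Y (i + 1)) \<in> E \<inter> C \<times> C" for i
  proof -
    consider "i < M" | "M \<le> i" "i < M + int m" | "M + int m \<le> i"
      by linarith
    then show ?thesis
    proof cases
      case 1
      then show ?thesis using pC[of i] Y_p[of i] Y_p[of "i + 1"] by simp
    next
      case 2
      moreover have "nat (i + 1 - M) = Suc (nat (i - M))"
        using 2 by linarith
      ultimately have "Y i = w (nat (i - M))" "Y (i + 1) = w (Suc (nat (i - M)))" "nat (i - M) < m"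
        using Y_w[of i] Y_w[of "i + 1"] by simp_all
      then show ?thesis using w(3) by simp
    next
      case 3
      then show ?thesis using qC[of "i - S"] Y_q[of i] Y_q[of "i + 1"] by (simp add: algebra_simps)
    qed
  qed
  show thesis
  proof
    show "Y \<in> Omega E" "range Y \<subseteq> C"
      using edge by (auto simp: Omega_def)
    show "Y i = p i" if "i \<le> M" for i
      using that by (rule Y_p)
    show "Y (i + S) = q i" if "N \<le> i" for i
      using that Y_q[of "i + S"] by (simp add: S_def)
  qed
qed

lemma range_suspension_subset_lift:
  assumes "h > 0" "Y \<in> Omega E" "range Y \<subseteq> C"
  shows "range (suspension h Y) \<subseteq> lift E h C"
  using assms by (auto simp: mem_lift_iff[OF assms(1)] intro!: exI[of _ Y])

lemma lift_approx_by_common_orbit: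
  assumes h: "h > 0" and sc: "strongly_conn E C"
    and f: "f \<in> lift E h C" and g: "g \<in> lift E h C" and r: "r > 0"
  obtains Y a b where "Y \<in> Omega E" "range Y \<subseteq> C"
    "traj_dist h f (suspension h Y a) < r" "traj_dist h g (suspension h Y b) < r"
proof -
  obtain p c1 where p: "p \<in> Omega E" "range p \<subseteq> C" and fp: "f = suspension h p c1"
    using f unfolding mem_lift_iff[OF h] by blast
  obtain q c2 where q: "q \<in> Omega E" "range q \<subseteq> C" and gq: "g = suspension h q c2"
    using g unfolding mem_lift_iff[OF h] by blast
  obtain K where K: "(1/2::real) ^ K < r / 3"
    using real_arch_pow_inv[of "r / 3" "1/2"] r by force
  define M where "M = \<lfloor>((real K + 1) * h + c1) / h\<rfloor>"
  define N where "N = \<lfloor>(- (real K * h) + c2) / h\<rfloor>"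
  obtain Y S where Y: "Y \<in> Omega E" "range Y \<subseteq> C"
    and Yp: "\<And>i. i \<le> M \<Longrightarrow> Y i = p i" and Yq: "\<And>i. N \<le> i \<Longrightarrow> Y (i + S) = q i"
    using Omega_glue[OF sc p q, where M = M and N = N] by blast
  have "traj_dist h f (suspension h Y c1) \<le> 3 * (1/2) ^ K"
  proof (rule traj_dist_le_if_agree[OF h])
    fix u assume "u \<le> (real K + 1) * h"
    then have "\<lfloor>(u + c1) / h\<rfloor> \<le> M"
      unfolding M_def using h by (intro floor_mono divide_right_mono) auto
    then show "f u = suspension h Y c1 u"
      by (simp add: fp suspension_def Yp)
  qed
  moreover have "traj_dist h g (suspension h Y (c2 + of_int S * h)) \<le> 3 * (1/2) ^ K"
  proof (rule traj_dist_le_if_agree[OF h])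
    fix u assume "- (real K * h) \<le> u"
    then have "N \<le> \<lfloor>(u + c2) / h\<rfloor>"
      unfolding N_def using h by (intro floor_mono divide_right_mono) auto
    moreover have "(u + (c2 + of_int S * h)) / h = (u + c2) / h + of_int S"
      using h by (simp add: field_simps)
    ultimately show "g u = suspension h Y (c2 + of_int S * h) u"
      unfolding gq suspension_def using Yq by (metis floor_add_int)
  qed
  moreover have "3 * (1/2::real) ^ K < r"
    using K by simp
  ultimately show thesis
    using that[OF Y, of c1 "c2 + of_int S * h"] by linarith
qed

section \<open>Connectedness of the lift\<close>

lemma connectedin_if_points_linked:
  assumes "S \<subseteq> topspace X"
    and linked: "\<And>x y U V. \<lbrakk>x \<in> S; y \<in> S; openin X U; openin X V; x \<in> U; y \<in> V\<rbrakk>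
      \<Longrightarrow> \<exists>T \<subseteq> S. connectedin X T \<and> T \<inter> U \<noteq> {} \<and> T \<inter> V \<noteq> {}"
  shows "connectedin X S"
  unfolding connectedin
proof (intro conjI assms notI)
  assume "\<exists>U V. openin X U \<and> openin X V \<and> S \<subseteq> U \<union> V \<and> U \<inter> V \<inter> S = {} \<and>
    U \<inter> S \<noteq> {} \<and> V \<inter> S \<noteq> {}"
  then obtain U V x y where UV: "openin X U" "openin X V" "S \<subseteq> U \<union> V" "U \<inter> V \<inter> S = {}"
    and xy: "x \<in> U \<inter> S" "y \<in> V \<inter> S"
    by blast
  then obtain T where "T \<subseteq> S" "connectedin X T" "T \<inter> U \<noteq> {}" "T \<inter> V \<noteq> {}"
    using linked[of x y U V] by blast
  with UV show False
    by (intro connectedinD[of X T U V]) blast+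
qed

lemma (in Metric_space) continuous_map_real_if_Lipschitz:
  assumes "range f \<subseteq> M" and Lipschitz: "\<And>s t. d (f s) (f t) \<le> L * \<bar>s - t\<bar>"
  shows "continuous_map euclideanreal mtopology f"
  unfolding continuous_map_to_metric
proof (intro ballI allI impI)
  fix s and \<epsilon> :: real
  assume "\<epsilon> > 0"
  have "f t \<in> mball (f s) \<epsilon>" if "t \<in> ball s (\<epsilon> / (\<bar>L\<bar> + 1))" for t
  proof -
    have "(\<bar>L\<bar> + 1) * \<bar>s - t\<bar> < \<epsilon>"
      using that by (simp add: dist_real_def pos_less_divide_eq mult.commute)
    moreover have "L * \<bar>s - t\<bar> \<le> (\<bar>L\<bar> + 1) * \<bar>s - t\<bar>"
      by (intro mult_right_mono) auto
    ultimately have "d (f s) (f t) < \<epsilon>"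
      using Lipschitz[of s t] by linarith
    then show ?thesis
      using assms(1) by auto
  qed
  moreover have "openin euclideanreal (ball s (\<epsilon> / (\<bar>L\<bar> + 1)))" "s \<in> ball s (\<epsilon> / (\<bar>L\<bar> + 1))"
    using \<open>\<epsilon> > 0\<close> by auto
  ultimately show "\<exists>U. openin euclideanreal U \<and> s \<in> U \<and> (\<forall>t\<in>U. f t \<in> mball (f s) \<epsilon>)"
    by blast
qed

lemma connectedin_suspension_orbit:
  assumes h: "h > 0" and Y: "Y \<in> Omega E"
  shows "connectedin (Metric_space.mtopology (Delta E h) (traj_dist h)) (range (suspension h Y))"
proof -
  interpret Delta: Metric_space "Delta E h" "traj_dist h"
    by (rule Metric_space_Delta[OF h])
  have "continuous_map euclideanreal Delta.mtopology (suspension h Y)"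
  proof (rule Delta.continuous_map_real_if_Lipschitz)
    show "range (suspension h Y) \<subseteq> Delta E h"
      using Y by (auto simp: mem_Delta_iff[OF h] intro!: exI[of _ Y])
    show "traj_dist h (suspension h Y s) (suspension h Y t) \<le> 3 / h * \<bar>s - t\<bar>" for s t
      using traj_dist_suspension_le[OF h, of Y s t] by (simp add: abs_minus_commute)
  qed
  moreover have "connectedin euclideanreal UNIV"
    by simp
  ultimately show ?thesis
    by (rule connectedin_continuous_map_image)
qed

theorem mainTheorem8:
  fixes E :: "('v::finite \<times> 'v) set" and h :: real and C :: "'v set"
  assumes "h > 0" and "scc E C"
  shows "connectedin (Metric_space.mtopology (Delta E h) (traj_dist h)) (lift E h C)"
proof -
  interpret Delta: Metric_space "Delta E h" "traj_dist h"
    by (rule Metric_space_Delta[OF \<open>h > 0\<close>])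
  show ?thesis
  proof (rule connectedin_if_points_linked)
    show "lift E h C \<subseteq> topspace Delta.mtopology"
      by (auto simp: lift_def)
  next
    fix f g U V
    assume fg: "f \<in> lift E h C" "g \<in> lift E h C"
      and UV: "openin Delta.mtopology U" "openin Delta.mtopology V" "f \<in> U" "g \<in> V"
    then obtain r1 r2 where r: "r1 > 0" "r2 > 0" "Delta.mball f r1 \<subseteq> U" "Delta.mball g r2 \<subseteq> V"
      using Delta.openin_mtopology by meson
    obtain Y a b where Y: "Y \<in> Omega E" "range Y \<subseteq> C"
      and close: "traj_dist h f (suspension h Y a) < min r1 r2" "traj_dist h g (suspension h Y b) < min r1 r2"
      by (rule lift_approx_by_common_orbit[OF \<open>h > 0\<close> _ fg, where r = "min r1 r2"])
        (use \<open>scc E C\<close> r in \<open>simp_all add: scc_def\<close>)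
    have orbit: "range (suspension h Y) \<subseteq> lift E h C"
      by (rule range_suspension_subset_lift[OF \<open>h > 0\<close> Y])
    then have "suspension h Y a \<in> Delta.mball f r1" "suspension h Y b \<in> Delta.mball g r2"
      using fg close by (auto simp: lift_def)
    then have "suspension h Y a \<in> U" "suspension h Y b \<in> V"
      using r by blast+
    with orbit connectedin_suspension_orbit[OF \<open>h > 0\<close> Y(1)]
    show "\<exists>T \<subseteq> lift E h C. connectedin Delta.mtopology T \<and> T \<inter> U \<noteq> {} \<and> T \<inter> V \<noteq> {}"
      by blast
  qed
qed

end
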